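(* Let $\Phi=\Phi_{\vec p}$ be a Weyl channel, written as $\Phi=\frac1N\sum_{\mu=0}^{N^2-1}\lambda_\mu|U_\mu\rangle\rangle\langle\langle U_\mu|$, where $\lambda_{mn}=\sum_{k,l}H_{mn,kl}\,p_{kl}$ (so $\lambda_0=1$). Then $\Phi\in\mathcal{A}_N^Q$ if and only if there exists a choice of logarithms $\ell_\nu$ (complex numbers with $e^{\ell_\nu}=\lambda_\nu$, $\nu=1,\dots,N^2-1$) such that for every $\mu=1,\dots,N^2-1$ the number $$t_\mu=\frac1{N^2}\sum_{\nu=1}^{N^2-1}H_{\mu\nu}\,\ell_\nu$$ is real and non-negative. In that case $\Phi=\exp\big(\sum_{\mu=1}^{N^2-1}t_\mu\mathcal{L}_\mu\big)$.
   Context: Let $N\ge2$, $\omega=e^{2\pi i/N}$, $X|j\rangle=|j\oplus1\rangle$ (addition mod $N$), $Z=\mathrm{diag}(1,\omega,\dots,\omega^{N-1})$, Weyl unitaries $U_{kl}=X^kZ^l$, $k,l\in\{0,\dots,N-1\}$, also indexed by $\mu=Nk+l\in\{0,\dots,N^2-1\}$. Maps on $N\times N$ matrices are identified with superoperators acting on $|A\rangle\rangle=\sum_{ij}A_{ij}|i\rangle|j\rangle$ ($\rho\mapsto K\rho K^\dagger$ corresponds to $K\otimes\overline{K}$). A Weyl channel is $\Phi_{\vec p}=\sum_\mu p_\mu U_\mu\otimes\overline{U}_\mu$ with $\vec p$ a probability vector of length $N^2$. $H$ is the $N^2\times N^2$ matrix with entries $H_{mn,kl}=\omega^{ml-kn}$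 (rows indexed by $\mu=Nm+n$, columns by $\nu=Nk+l$). $\mathcal{L}_\mu=U_\mu\otimes\overline{U}_\mu-\mathbb{I}_{N^2}$, and $\mathcal{A}_N^Q$ is the set of superoperators $\exp(\sum_{\mu=1}^{N^2-1}t_\mu\mathcal{L}_\mu)$ with all $t_\mu\ge0$. *)

theory Defs
  imports Complex_Main "Jordan_Normal_Form.Matrix"
begin

text \<open>Superoperators on N x N matrices are N^2 x N^2 matrices, where the basis vector
  |i>|j> of C^N tensor C^N has index N*i+j. Weyl indices mu = N*k + l.\<close>

definition omega :: "nat \<Rightarrow> complex" where
  "omega N = exp (2 * of_real pi * \<i> / of_nat N)"

definition shiftX :: "nat \<Rightarrow> complex mat" where
  "shiftX N = mat N N (\<lambda>(i, j). if i = (j + 1) mod N then 1 else 0)"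

definition clockZ :: "nat \<Rightarrow> complex mat" where
  "clockZ N = mat N N (\<lambda>(i, j). if i = j then omega N ^ i else 0)"

definition weylU :: "nat \<Rightarrow> nat \<Rightarrow> nat \<Rightarrow> complex mat" where
  "weylU N k l = (shiftX N ^\<^sub>m k) * (clockZ N ^\<^sub>m l)"

definition weylU_idx :: "nat \<Rightarrow> nat \<Rightarrow> complex mat" where
  "weylU_idx N \<mu> = weylU N (\<mu> div N) (\<mu> mod N)"

definition kron :: "nat \<Rightarrow> complex mat \<Rightarrow> complex mat \<Rightarrow> complex mat" where
  "kron N A B = mat (N*N) (N*N)
     (\<lambda>(r, c). A $$ (r div N, c div N) * B $$ (r mod N, c mod N))"

definition conj_mat :: "complex mat \<Rightarrow> complex mat" where
  "conj_mat A = mat (dim_row A) (dim_col A) (\<lambda>ij. cnj (A $$ ij))"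

text \<open>Superoperator of rho \<mapsto> K rho K^dagger: K \<otimes> conj K.\<close>
definition superop :: "nat \<Rightarrow> complex mat \<Rightarrow> complex mat" where
  "superop N K = kron N K (conj_mat K)"

definition prob_vec :: "nat \<Rightarrow> (nat \<Rightarrow> real) \<Rightarrow> bool" where
  "prob_vec N p \<longleftrightarrow> (\<forall>\<mu><N*N. p \<mu> \<ge> 0) \<and> (\<Sum>\<mu><N*N. p \<mu>) = 1"

definition weyl_channel :: "nat \<Rightarrow> (nat \<Rightarrow> real) \<Rightarrow> complex mat" where
  "weyl_channel N p = mat (N*N) (N*N)
     (\<lambda>rc. \<Sum>\<mu><N*N. of_real (p \<mu>) * superop N (weylU_idx N \<mu>) $$ rc)"

definition Hmat :: "nat \<Rightarrow> nat \<Rightarrow> nat \<Rightarrow> complex" where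
  "Hmat N \<mu> \<nu> = omega N powi
     (int (\<mu> div N) * int (\<nu> mod N) - int (\<nu> div N) * int (\<mu> mod N))"

definition weyl_eig :: "nat \<Rightarrow> (nat \<Rightarrow> real) \<Rightarrow> nat \<Rightarrow> complex" where
  "weyl_eig N p \<mu> = (\<Sum>\<nu><N*N. Hmat N \<mu> \<nu> * of_real (p \<nu>))"

definition genL :: "nat \<Rightarrow> nat \<Rightarrow> complex mat" where
  "genL N \<mu> = superop N (weylU_idx N \<mu>) - 1\<^sub>m (N*N)"

definition mexp :: "complex mat \<Rightarrow> complex mat" where
  "mexp A = mat (dim_row A) (dim_row A)
     (\<lambda>ij. \<Sum>k. (A ^\<^sub>m k) $$ ij / of_nat (fact k))"

definition gen_comb :: "nat \<Rightarrow> (nat \<Rightarrow> complex) \<Rightarrow> complex mat" where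
  "gen_comb N c = mat (N*N) (N*N) (\<lambda>rc. \<Sum>\<mu>\<in>{1..<N*N}. c \<mu> * genL N \<mu> $$ rc)"

definition AQ :: "nat \<Rightarrow> complex mat set" where
  "AQ N = {mexp (gen_comb N (\<lambda>\<mu>. of_real (t \<mu>))) | t :: nat \<Rightarrow> real.
             \<forall>\<mu>\<in>{1..<N*N}. t \<mu> \<ge> 0}"

definition t_of_log :: "nat \<Rightarrow> (nat \<Rightarrow> complex) \<Rightarrow> nat \<Rightarrow> complex" where
  "t_of_log N lg \<mu> = (\<Sum>\<nu>\<in>{1..<N*N}. Hmat N \<mu> \<nu> * lg \<nu>) / of_nat (N*N)"

end

(* The vectorised Weyl unitaries |U_nu>> are pairwise orthogonal with squared norm N, so the
   rank-one projectors |U_nu>><<U_nu| / N resolve the identity of C^N (x) C^N.  Conjugating U_nu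
   by U_mu only multiplies it by the commutation phase H_{nu mu}; hence
   U_mu (x) conj U_mu = sum_nu H_{nu mu} |U_nu>><<U_nu| / N, and every Weyl channel and every
   generator L_mu is diagonal in this basis.  The channel has eigenvalues lambda_nu, the generator
   sum_mu t_mu L_mu has eigenvalues g_nu = sum_{mu >= 1} t_mu (H_{nu mu} - 1), and the matrix
   exponential acts on eigenvalues.  As H^2 = N^2 I and the first row and column of H are 1, the
   map t |-> g is inverted on the indices >= 1 by l |-> (1/N^2) sum_{nu >= 1} H_{mu nu} l_nu.
   So Phi = exp (sum_mu t_mu L_mu) exactly when the g_nu are logarithms of the lambda_nu. *)

theory Submission
  imports Defs "HOL-Analysis.Complex_Transcendental"
begin

lemma div_less_of_less_square:
  fixes r N :: nat
  assumes "r < N * N"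
  shows "r div N < N"
  using less_mult_imp_div_less[of r N N] assms by simp

lemma mod_less_of_less_square:
  fixes r N :: nat
  assumes "r < N * N"
  shows "r mod N < N"
  using assms by (cases "N = 0") auto

lemma eq_iff_div_mod_eq:
  fixes a b N :: nat
  shows "a = b \<longleftrightarrow> a div N = b div N \<and> a mod N = b mod N"
  by (metis div_mult_mod_eq)

lemma sum_lessThan_square_div_mod:
  fixes N :: nat and g :: "nat \<Rightarrow> nat \<Rightarrow> 'a::comm_monoid_add"
  shows "(\<Sum>t<N*N. g (t div N) (t mod N)) = (\<Sum>j<N. \<Sum>j'<N. g j j')"
proof -
  have "N * j + j' < N * N" if "j < N" "j' < N" for j j'
  proof -
    have "N * j + j' < N * Suc j" using that by simp
    also have "\<dots> \<le> N * N" using that by (intro mult_le_mono2) simp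
    finally show ?thesis .
  qed
  then have "(\<Sum>t<N*N. g (t div N) (t mod N)) = (\<Sum>(j, j')\<in>{..<N} \<times> {..<N}. g j j')"
    by (intro sum.reindex_bij_witness[where i = "\<lambda>(j, j'). N * j + j'" and j = "\<lambda>t. (t div N, t mod N)"])
      (auto simp: div_less_of_less_square mod_less_of_less_square)
  then show ?thesis by (simp add: sum.cartesian_product)
qed

lemma sum_if_dvd_diff:
  assumes "N > 0"
  shows "(\<Sum>m<N. if int N dvd (int m - X) then F m else 0) = F (nat (X mod int N))"
proof -
  let ?m0 = "nat (X mod int N)"
  have "int N dvd (int m - X) \<longleftrightarrow> m = ?m0" if "m < N" for m
    using that assms by (auto simp flip: mod_eq_dvd_iff)
  moreover have "?m0 < N" using assms by (simp add: nat_less_iff)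
  ultimately show ?thesis by (simp add: sum.delta cong: if_cong)
qed

lemma dvd_mod_diff_iff: "int N dvd (X mod int N - Y) \<longleftrightarrow> int N dvd (X - Y)"
  by (metis mod_diff_left_eq dvd_eq_mod_eq_0)

lemma int_dvd_diff_iff_eq:
  assumes "a < N" "b < N"
  shows "int N dvd (int a - int b) \<longleftrightarrow> a = b"
  using assms by (metis mod_eq_dvd_iff of_nat_mod mod_less of_nat_eq_iff)

lemma index_mult_square_mat:
  assumes "A \<in> carrier_mat n n" "B \<in> carrier_mat n n" "i < n" "j < n"
  shows "(A * B) $$ (i, j) = (\<Sum>t<n. A $$ (i, t) * B $$ (t, j))"
  using assms by (simp add: scalar_prod_def atLeast0LessThan)

section \<open>Roots of unity\<close>

definition unit_root :: "nat \<Rightarrow> int \<Rightarrow> complex" where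
  "unit_root N x = exp (2 * of_real pi * \<i> * of_int x / of_nat N)"

lemma unit_root_add: "unit_root N (x + y) = unit_root N x * unit_root N y"
  unfolding unit_root_def by (simp add: exp_add[symmetric] algebra_simps add_divide_distrib)

lemma unit_root_0 [simp]: "unit_root N 0 = 1"
  unfolding unit_root_def by simp

lemma cnj_unit_root: "cnj (unit_root N x) = unit_root N (- x)"
  unfolding unit_root_def exp_cnj by simp

lemma unit_root_of_nat_mult: "unit_root N (int j * x) = unit_root N x ^ j"
  unfolding unit_root_def by (simp add: exp_of_nat_mult[symmetric] algebra_simps)

lemma unit_root_eq_1_iff:
  assumes "N > 0"
  shows "unit_root N x = 1 \<longleftrightarrow> int N dvd x"
proof -
  have "2 * pi * x / N = of_int (2 * n) * pi \<longleftrightarrow> x = N * n" for n :: int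
  proof -
    have "2 * pi * x / N = of_int (2 * n) * pi \<longleftrightarrow> real_of_int x = real_of_int (N * n)"
      using assms by (simp add: field_simps)
    then show ?thesis by linarith
  qed
  then show ?thesis
    unfolding unit_root_def exp_eq_1 by (auto simp: dvd_def)
qed

lemma unit_root_cong:
  assumes "N > 0" "int N dvd (x - y)"
  shows "unit_root N x = unit_root N y"
  using unit_root_add[of N "x - y" y] unit_root_eq_1_iff[OF assms(1), of "x - y"] assms(2) by simp

lemma sum_unit_root:
  assumes "N > 0"
  shows "(\<Sum>j<N. unit_root N (int j * x)) = (if int N dvd x then of_nat N else 0)"
proof (cases "int N dvd x")
  case True
  then have "unit_root N x = 1" using unit_root_eq_1_iff[OF assms] by simp
  then show ?thesis using True by (simp add: unit_root_of_nat_mult)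
next
  case False
  have "unit_root N x ^ N = 1"
    using unit_root_of_nat_mult[of N N x] unit_root_eq_1_iff[OF assms, of "int N * x"] by simp
  then show ?thesis
    using False assms by (simp add: unit_root_of_nat_mult unit_root_eq_1_iff sum_gp_strict)
qed

lemma sum_unit_root_diff:
  assumes "N > 0" "a < N" "b < N"
  shows "(\<Sum>j<N. unit_root N (int j * (int a - int b))) = (if a = b then of_nat N else 0)"
  using sum_unit_root[OF assms(1)] int_dvd_diff_iff_eq[OF assms(2,3)] by simp

lemma omega_power: "omega N ^ n = unit_root N (int n)"
proof -
  have "omega N = unit_root N 1"
    unfolding omega_def unit_root_def by simp
  then show ?thesis
    using unit_root_of_nat_mult[of N n 1] by simp
qed

lemma omega_powi: "omega N powi x = unit_root N x"
proof (cases x rule: int_cases2)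
  case (nonneg n)
  then show ?thesis by (simp add: omega_power)
next
  case (nonpos n)
  have "unit_root N (int n) * unit_root N (- int n) = 1"
    by (simp flip: unit_root_add)
  then show ?thesis
    using nonpos by (simp add: power_int_minus omega_power inverse_unique)
qed

lemma Hmat_eq_unit_root:
  "Hmat N \<mu> \<nu> = unit_root N (int (\<mu> div N) * int (\<nu> mod N) - int (\<nu> div N) * int (\<mu> mod N))"
  unfolding Hmat_def omega_powi ..

section \<open>The Weyl unitaries\<close>

definition weyl_coeff :: "nat \<Rightarrow> nat \<Rightarrow> nat \<Rightarrow> nat \<Rightarrow> nat \<Rightarrow> complex" where
  "weyl_coeff N k l i j =
     (if int N dvd (int i - int j - int k) then unit_root N (int j * int l) else 0)"

lemma weyl_coeff_eq_if_dvd_sub: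
  "weyl_coeff N k l i j =
     (if int N dvd (int k - (int i - int j)) then unit_root N (int j * int l) else 0)"
proof -
  have "int N dvd (int k - (int i - int j)) \<longleftrightarrow> int N dvd (int i - int j - int k)"
    using dvd_minus_iff[of "int N" "int i - int j - int k"] by (simp add: algebra_simps)
  then show ?thesis unfolding weyl_coeff_def by simp
qed

lemma shiftX_carrier: "shiftX N \<in> carrier_mat N N"
  unfolding shiftX_def by simp

lemma clockZ_carrier: "clockZ N \<in> carrier_mat N N"
  unfolding clockZ_def by simp

lemma weylU_carrier: "weylU N k l \<in> carrier_mat N N"
  unfolding weylU_def
  by (rule mult_carrier_mat[OF pow_carrier_mat[OF shiftX_carrier] pow_carrier_mat[OF clockZ_carrier]])

lemma index_shiftX:
  assumes "t < N" "j < N"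
  shows "shiftX N $$ (t, j) = (if int N dvd (int t - (int j + 1)) then 1 else 0)"
proof -
  have mod: "int ((j + 1) mod N) = (int j + 1) mod int N"
    by (simp add: of_nat_mod add.commute)
  have "t = (j + 1) mod N \<longleftrightarrow> int t = (int j + 1) mod int N"
    unfolding mod[symmetric] by (rule of_nat_eq_iff[symmetric])
  also have "\<dots> \<longleftrightarrow> int t mod int N = (int j + 1) mod int N"
    using assms by simp
  also have "\<dots> \<longleftrightarrow> int N dvd (int t - (int j + 1))"
    by (rule mod_eq_dvd_iff)
  finally show ?thesis
    using assms unfolding shiftX_def by simp
qed

lemma index_shiftX_power:
  assumes N: "N > 0" and "i < N" "j < N"
  shows "(shiftX N ^\<^sub>m k) $$ (i, j) = (if int N dvd (int i - int j - int k) then 1 else 0)"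
  using assms(3)
proof (induction k arbitrary: j)
  case 0
  then show ?case using int_dvd_diff_iff_eq[OF assms(2) 0] assms(2) by (simp add: shiftX_def)
next
  case (Suc k)
  have "(shiftX N ^\<^sub>m Suc k) $$ (i, j) = (\<Sum>t<N. (shiftX N ^\<^sub>m k) $$ (i, t) * shiftX N $$ (t, j))"
    using Suc.prems assms(2) shiftX_carrier by (simp add: index_mult_square_mat)
  also have "\<dots> = (\<Sum>t<N. if int N dvd (int t - (int j + 1))
                              then (if int N dvd (int i - int t - int k) then 1 else 0) else 0)"
    using Suc by (intro sum.cong refl) (simp add: index_shiftX)
  also have "\<dots> = (if int N dvd (int i - (int j + 1) mod int N - int k) then 1 else 0)"
    using N by (simp add: sum_if_dvd_diff)
  also have "int N dvd (int i - (int j + 1) mod int N - int k) \<longleftrightarrow> int N dvd (int i - int j - int (Suc k))"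
  proof -
    have "int i - (int j + 1) mod int N - int k = - ((int j + 1) mod int N - (int i - int k))"
      by simp
    moreover have "int i - int j - int (Suc k) = - ((int j + 1) - (int i - int k))"
      by simp
    ultimately show ?thesis
      by (simp only: dvd_minus_iff dvd_mod_diff_iff)
  qed
  finally show ?case .
qed

lemma index_clockZ_power:
  assumes "i < N" "j < N"
  shows "(clockZ N ^\<^sub>m l) $$ (i, j) = (if i = j then unit_root N (int i * int l) else 0)"
  using assms(2)
proof (induction l arbitrary: j)
  case 0
  then show ?case using assms(1) by (simp add: clockZ_def)
next
  case (Suc l)
  have "(clockZ N ^\<^sub>m Suc l) $$ (i, j) = (\<Sum>t<N. (clockZ N ^\<^sub>m l) $$ (i, t) * clockZ N $$ (t, j))"
    using Suc.prems assms(1) clockZ_carrier by (simp add: index_mult_square_mat)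
  also have "\<dots> = (\<Sum>t<N. if t = i then (if i = j then unit_root N (int i * int l) * omega N ^ i else 0) else 0)"
    using Suc assms(1) by (intro sum.cong refl) (auto simp: clockZ_def)
  also have "\<dots> = (if i = j then unit_root N (int i * int l) * unit_root N (int i) else 0)"
    using assms(1) by (simp add: omega_power)
  also have "unit_root N (int i * int l) * unit_root N (int i) = unit_root N (int i * int (Suc l))"
    by (simp add: unit_root_add[symmetric] algebra_simps)
  finally show ?case .
qed

lemma index_weylU:
  assumes N: "N > 0" and "i < N" "j < N"
  shows "weylU N k l $$ (i, j) = weyl_coeff N k l i j"
proof -
  have "weylU N k l $$ (i, j) = (\<Sum>t<N. (shiftX N ^\<^sub>m k) $$ (i, t) * (clockZ N ^\<^sub>m l) $$ (t, j))"
    unfolding weylU_def using assms shiftX_carrier clockZ_carrier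
    by (simp add: index_mult_square_mat pow_carrier_mat)
  also have "\<dots> = (shiftX N ^\<^sub>m k) $$ (i, j) * unit_root N (int j * int l)"
    using assms by (simp add: index_clockZ_power if_distrib sum.delta' cong: if_cong)
  also have "\<dots> = weyl_coeff N k l i j"
    using assms by (simp add: index_shiftX_power weyl_coeff_def)
  finally show ?thesis .
qed

lemma sum_cond_unit_root:
  assumes "N > 0"
  shows "(\<Sum>n<N. if P then (if Q then A * unit_root N (int n * D) else 0) else 0)
     = (if P \<and> Q then A * (if int N dvd D then of_nat N else 0) else 0)"
  using sum_unit_root[OF assms, of D] by (cases P; cases Q) (simp_all add: sum_distrib_left[symmetric])

lemma weyl_coeff_orthogonal:
  assumes N: "N > 0" and "m < N" "n < N" "m' < N" "n' < N"
  shows "(\<Sum>j<N. \<Sum>j'<N. cnj (weyl_coeff N m n j j') * weyl_coeff N m' n' j j')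
    = (if m = m' \<and> n = n' then of_nat N else 0)"
proof -
  have inner: "(\<Sum>j<N. cnj (weyl_coeff N m n j j') * weyl_coeff N m' n' j j')
    = (if m = m' then unit_root N (int j' * (int n' - int n)) else 0)" for j'
  proof -
    have "(\<Sum>j<N. cnj (weyl_coeff N m n j j') * weyl_coeff N m' n' j j')
      = (\<Sum>j<N. if int N dvd (int j - (int j' + int m)) then
           (if int N dvd (int j - int j' - int m') then unit_root N (int j' * (int n' - int n)) else 0)
         else 0)"
      by (intro sum.cong refl)
        (auto simp: weyl_coeff_def cnj_unit_root unit_root_add[symmetric] algebra_simps)
    also have "\<dots> = (if int N dvd ((int j' + int m) mod int N - (int j' + int m'))
        then unit_root N (int j' * (int n' - int n)) else 0)"
      using N by (simp add: sum_if_dvd_diff diff_diff_eq)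
    also have "int N dvd ((int j' + int m) mod int N - (int j' + int m')) \<longleftrightarrow> m = m'"
      using dvd_mod_diff_iff int_dvd_diff_iff_eq[OF assms(2,4)] by simp
    finally show ?thesis .
  qed
  have "(\<Sum>j<N. \<Sum>j'<N. cnj (weyl_coeff N m n j j') * weyl_coeff N m' n' j j')
    = (\<Sum>j'<N. \<Sum>j<N. cnj (weyl_coeff N m n j j') * weyl_coeff N m' n' j j')"
    by (rule sum.swap)
  also have "\<dots> = (if m = m' then \<Sum>j'<N. unit_root N (int j' * (int n' - int n)) else 0)"
    by (simp add: inner)
  also have "\<dots> = (if m = m' \<and> n = n' then of_nat N else 0)"
    using sum_unit_root_diff[OF N assms(5,3)] by simp
  finally show ?thesis .
qed

lemma weyl_coeff_complete:
  assumes N: "N > 0" and "a < N" "a' < N" "b < N" "b' < N"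
  shows "(\<Sum>m<N. \<Sum>n<N. weyl_coeff N m n a a' * cnj (weyl_coeff N m n b b'))
    = (if a = b \<and> a' = b' then of_nat N else 0)"
proof -
  have "(\<Sum>m<N. \<Sum>n<N. weyl_coeff N m n a a' * cnj (weyl_coeff N m n b b')) =
     (\<Sum>m<N. \<Sum>n<N. if int N dvd (int m - (int a - int a')) then
        (if int N dvd (int m - (int b - int b')) then 1 * unit_root N (int n * (int a' - int b')) else 0)
      else 0)"
    by (intro sum.cong refl)
      (auto simp: weyl_coeff_eq_if_dvd_sub cnj_unit_root unit_root_add[symmetric] algebra_simps)
  also have "\<dots> = (\<Sum>m<N. if int N dvd (int m - (int a - int a')) \<and> int N dvd (int m - (int b - int b'))
        then 1 * (if int N dvd (int a' - int b') then of_nat N else 0) else 0)"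
    by (intro sum.cong refl sum_cond_unit_root N)
  also have "\<dots> = (\<Sum>m<N. if int N dvd (int m - (int a - int a')) then
        (if int N dvd (int m - (int b - int b')) \<and> a' = b' then of_nat N else 0) else 0)"
    using int_dvd_diff_iff_eq[OF assms(3,5)] by (intro sum.cong refl) auto
  also have "\<dots> = (if int N dvd ((int a - int a') mod int N - (int b - int b')) \<and> a' = b'
      then of_nat N else 0)"
    using N by (simp add: sum_if_dvd_diff)
  also have "\<dots> = (if a = b \<and> a' = b' then of_nat N else 0)"
    using int_dvd_diff_iff_eq[OF assms(2,4)] by (auto simp: dvd_mod_diff_iff)
  finally show ?thesis .
qed

lemma weyl_coeff_mult_cnj:
  "weyl_coeff N k l a b * cnj (weyl_coeff N k l a' b') =
     (if int N dvd (int a - int b - int k) \<and> int N dvd (int a' - int b' - int k)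
      then unit_root N ((int b - int b') * int l) else 0)"
  by (auto simp: weyl_coeff_def cnj_unit_root unit_root_add[symmetric] algebra_simps)

lemma sum_phase_weyl_coeff_mult_cnj:
  assumes N: "N > 0"
  shows "(\<Sum>m<N. \<Sum>n<N. unit_root N (int m * int l - int k * int n) *
            (weyl_coeff N m n a a' * cnj (weyl_coeff N m n b b') / of_nat N)) =
     (if int N dvd (int a - int a' - (int b - int b')) \<and> int N dvd (int a' - int b' - int k)
      then unit_root N ((int a - int a') * int l) else 0)"
proof -
  let ?D = "int a' - int b' - int k"
  have "(\<Sum>m<N. \<Sum>n<N. unit_root N (int m * int l - int k * int n) *
            (weyl_coeff N m n a a' * cnj (weyl_coeff N m n b b') / of_nat N)) =
     (\<Sum>m<N. \<Sum>n<N. if int N dvd (int m - (int a - int a')) then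
        (if int N dvd (int m - (int b - int b'))
         then (unit_root N (int m * int l) / of_nat N) * unit_root N (int n * ?D) else 0)
      else 0)"
    by (intro sum.cong refl)
      (auto simp: weyl_coeff_eq_if_dvd_sub cnj_unit_root unit_root_add[symmetric] algebra_simps)
  also have "\<dots> = (\<Sum>m<N. if int N dvd (int m - (int a - int a')) \<and> int N dvd (int m - (int b - int b'))
        then (unit_root N (int m * int l) / of_nat N) * (if int N dvd ?D then of_nat N else 0) else 0)"
    by (intro sum.cong refl sum_cond_unit_root N)
  also have "\<dots> = (\<Sum>m<N. if int N dvd (int m - (int a - int a')) then
        (if int N dvd (int m - (int b - int b')) \<and> int N dvd ?D then unit_root N (int m * int l) else 0)
      else 0)"
    using N by (intro sum.cong refl) auto
  also have "\<dots> = (if int N dvd ((int a - int a') mod int N - (int b - int b')) \<and> int N dvd ?D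
       then unit_root N ((int a - int a') mod int N * int l) else 0)"
    using N by (simp add: sum_if_dvd_diff)
  also have "unit_root N ((int a - int a') mod int N * int l) = unit_root N ((int a - int a') * int l)"
    by (rule unit_root_cong[OF N]) (simp add: mod_eq_dvd_iff[symmetric] mod_mult_left_eq)
  finally show ?thesis
    by (simp add: dvd_mod_diff_iff)
qed

lemma weyl_coeff_mult_cnj_expansion:
  assumes N: "N > 0"
  shows "weyl_coeff N k l a b * cnj (weyl_coeff N k l a' b') =
    (\<Sum>m<N. \<Sum>n<N. unit_root N (int m * int l - int k * int n) *
       (weyl_coeff N m n a a' * cnj (weyl_coeff N m n b b') / of_nat N))"
proof (cases "int N dvd (int a' - int b' - int k)")
  case False
  then show ?thesis
    by (subst sum_phase_weyl_coeff_mult_cnj[OF N]) (simp add: weyl_coeff_mult_cnj)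
next
  case True
  have "int a - int a' - (int b - int b') = (int a - int b - int k) - (int a' - int b' - int k)"
    by simp
  then have iff: "int N dvd (int a - int a' - (int b - int b')) \<longleftrightarrow> int N dvd (int a - int b - int k)"
    using True by (metis dvd_diff diff_add_cancel dvd_add)
  have "unit_root N ((int a - int a') * int l) = unit_root N ((int b - int b') * int l)"
    if "int N dvd (int a - int b - int k)"
  proof (rule unit_root_cong[OF N])
    have "(int a - int a') * int l - (int b - int b') * int l = (int a - int a' - (int b - int b')) * int l"
      by (simp add: algebra_simps)
    then show "int N dvd (int a - int a') * int l - (int b - int b') * int l"
      using that iff by simp
  qed
  then show ?thesis
    using True iff
    by (subst sum_phase_weyl_coeff_mult_cnj[OF N]) (simp add: weyl_coeff_mult_cnj)
qed

section \<open>Superoperators diagonal in the Weyl basis\<close>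

text \<open>\<open>weyl_vec N \<nu>\<close> is the vectorisation \<open>|U\<^sub>\<nu>\<rangle>\<rangle>\<close>, and \<open>weyl_diag N f\<close> is
  \<open>\<Sum>\<^sub>\<nu> f\<^sub>\<nu> |U\<^sub>\<nu>\<rangle>\<rangle>\<langle>\<langle>U\<^sub>\<nu>| / N\<close>.\<close>

definition weyl_vec :: "nat \<Rightarrow> nat \<Rightarrow> nat \<Rightarrow> complex" where
  "weyl_vec N \<nu> r = weyl_coeff N (\<nu> div N) (\<nu> mod N) (r div N) (r mod N)"

definition weyl_proj :: "nat \<Rightarrow> nat \<Rightarrow> nat \<Rightarrow> nat \<Rightarrow> complex" where
  "weyl_proj N \<nu> r c = weyl_vec N \<nu> r * cnj (weyl_vec N \<nu> c) / of_nat N"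

definition weyl_diag :: "nat \<Rightarrow> (nat \<Rightarrow> complex) \<Rightarrow> complex mat" where
  "weyl_diag N f = Matrix.mat (N*N) (N*N) (\<lambda>(r, c). \<Sum>\<nu><N*N. f \<nu> * weyl_proj N \<nu> r c)"

lemma weyl_vec_orthogonal:
  assumes N: "N > 0" and \<nu>: "\<nu> < N*N" and \<rho>: "\<rho> < N*N"
  shows "(\<Sum>t<N*N. cnj (weyl_vec N \<nu> t) * weyl_vec N \<rho> t) = (if \<nu> = \<rho> then of_nat N else 0)"
proof -
  have "(\<Sum>t<N*N. cnj (weyl_vec N \<nu> t) * weyl_vec N \<rho> t) =
    (\<Sum>j<N. \<Sum>j'<N. cnj (weyl_coeff N (\<nu> div N) (\<nu> mod N) j j') * weyl_coeff N (\<rho> div N) (\<rho> mod N) j j')"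
    unfolding weyl_vec_def by (rule sum_lessThan_square_div_mod)
  then show ?thesis
    using weyl_coeff_orthogonal[OF N div_less_of_less_square[OF \<nu>] mod_less_of_less_square[OF \<nu>]
        div_less_of_less_square[OF \<rho>] mod_less_of_less_square[OF \<rho>]]
    by (simp add: eq_iff_div_mod_eq[of \<nu> \<rho> N])
qed

lemma weyl_vec_complete:
  assumes N: "N > 0" and r: "r < N*N" and c: "c < N*N"
  shows "(\<Sum>\<nu><N*N. weyl_vec N \<nu> r * cnj (weyl_vec N \<nu> c)) = (if r = c then of_nat N else 0)"
proof -
  have "(\<Sum>\<nu><N*N. weyl_vec N \<nu> r * cnj (weyl_vec N \<nu> c)) =
    (\<Sum>m<N. \<Sum>n<N. weyl_coeff N m n (r div N) (r mod N) * cnj (weyl_coeff N m n (c div N) (c mod N)))"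
    unfolding weyl_vec_def by (rule sum_lessThan_square_div_mod)
  then show ?thesis
    using weyl_coeff_complete[OF N div_less_of_less_square[OF r] mod_less_of_less_square[OF r]
        div_less_of_less_square[OF c] mod_less_of_less_square[OF c]]
    by (simp add: eq_iff_div_mod_eq[of r c N])
qed

lemma weyl_proj_mult:
  assumes N: "N > 0" and "\<nu> < N*N" "\<rho> < N*N"
  shows "(\<Sum>t<N*N. weyl_proj N \<nu> r t * weyl_proj N \<rho> t c) = (if \<nu> = \<rho> then weyl_proj N \<nu> r c else 0)"
proof -
  have "(\<Sum>t<N*N. weyl_proj N \<nu> r t * weyl_proj N \<rho> t c) =
      weyl_vec N \<nu> r * cnj (weyl_vec N \<rho> c) / (of_nat N * of_nat N) *
      (\<Sum>t<N*N. cnj (weyl_vec N \<nu> t) * weyl_vec N \<rho> t)"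
    unfolding weyl_proj_def sum_distrib_left by (intro sum.cong refl) (simp add: field_simps)
  then show ?thesis
    using N by (simp add: weyl_vec_orthogonal assms weyl_proj_def)
qed

lemma sum_weyl_proj:
  assumes N: "N > 0" and "r < N*N" "c < N*N"
  shows "(\<Sum>\<nu><N*N. weyl_proj N \<nu> r c) = (if r = c then 1 else 0)"
  using N weyl_vec_complete[OF assms] by (simp add: weyl_proj_def sum_divide_distrib[symmetric])

lemma index_superop:
  assumes "K \<in> carrier_mat N N" "r < N*N" "c < N*N"
  shows "superop N K $$ (r, c) = K $$ (r div N, c div N) * cnj (K $$ (r mod N, c mod N))"
  using assms div_less_of_less_square mod_less_of_less_square
  unfolding superop_def kron_def conj_mat_def by simp

lemma superop_weylU_expansion:
  assumes N: "N > 0" and \<mu>: "\<mu> < N*N" and r: "r < N*N" and c: "c < N*N"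
  shows "superop N (weylU_idx N \<mu>) $$ (r, c) = (\<Sum>\<nu><N*N. Hmat N \<nu> \<mu> * weyl_proj N \<nu> r c)"
proof -
  let ?k = "\<mu> div N" and ?l = "\<mu> mod N"
  have "(\<Sum>\<nu><N*N. Hmat N \<nu> \<mu> * weyl_proj N \<nu> r c) =
    (\<Sum>m<N. \<Sum>n<N. unit_root N (int m * int ?l - int ?k * int n) *
       (weyl_coeff N m n (r div N) (r mod N) * cnj (weyl_coeff N m n (c div N) (c mod N)) / of_nat N))"
    unfolding weyl_proj_def weyl_vec_def Hmat_eq_unit_root by (rule sum_lessThan_square_div_mod)
  also have "\<dots> = weyl_coeff N ?k ?l (r div N) (c div N) * cnj (weyl_coeff N ?k ?l (r mod N) (c mod N))"
    by (rule weyl_coeff_mult_cnj_expansion[OF N, symmetric])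
  also have "\<dots> = superop N (weylU_idx N \<mu>) $$ (r, c)"
    using r c div_less_of_less_square mod_less_of_less_square
    by (simp add: index_superop weylU_carrier weylU_idx_def index_weylU N)
  finally show ?thesis ..
qed

lemma weyl_diag_carrier: "weyl_diag N f \<in> carrier_mat (N*N) (N*N)"
  unfolding weyl_diag_def by simp

lemma dim_weyl_diag [simp]:
  "dim_row (weyl_diag N f) = N*N" "dim_col (weyl_diag N f) = N*N"
  unfolding weyl_diag_def by simp_all

lemma index_weyl_diag:
  "r < N*N \<Longrightarrow> c < N*N \<Longrightarrow> weyl_diag N f $$ (r, c) = (\<Sum>\<nu><N*N. f \<nu> * weyl_proj N \<nu> r c)"
  unfolding weyl_diag_def by simp

lemma weyl_diag_cong: "(\<And>\<nu>. \<nu> < N*N \<Longrightarrow> f \<nu> = g \<nu>) \<Longrightarrow> weyl_diag N f = weyl_diag N g"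
  unfolding weyl_diag_def by (intro cong_mat refl) (auto intro!: sum.cong)

lemma weyl_diag_mult:
  assumes N: "N > 0"
  shows "weyl_diag N f * weyl_diag N g = weyl_diag N (\<lambda>\<nu>. f \<nu> * g \<nu>)"
proof (rule eq_matI)
  fix r c assume "r < dim_row (weyl_diag N (\<lambda>\<nu>. f \<nu> * g \<nu>))" "c < dim_col (weyl_diag N (\<lambda>\<nu>. f \<nu> * g \<nu>))"
  then have rc: "r < N*N" "c < N*N" by simp_all
  have "(weyl_diag N f * weyl_diag N g) $$ (r, c) =
      (\<Sum>t<N*N. (\<Sum>\<nu><N*N. f \<nu> * weyl_proj N \<nu> r t) * (\<Sum>\<rho><N*N. g \<rho> * weyl_proj N \<rho> t c))"
    using rc by (subst index_mult_square_mat[OF weyl_diag_carrier weyl_diag_carrier]) (simp_all add: index_weyl_diag)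
  also have "\<dots> = (\<Sum>t<N*N. \<Sum>\<nu><N*N. \<Sum>\<rho><N*N. (f \<nu> * g \<rho>) * (weyl_proj N \<nu> r t * weyl_proj N \<rho> t c))"
    by (simp only: sum_product mult_ac)
  also have "\<dots> = (\<Sum>\<nu><N*N. \<Sum>t<N*N. \<Sum>\<rho><N*N. (f \<nu> * g \<rho>) * (weyl_proj N \<nu> r t * weyl_proj N \<rho> t c))"
    by (rule sum.swap)
  also have "\<dots> = (\<Sum>\<nu><N*N. \<Sum>\<rho><N*N. \<Sum>t<N*N. (f \<nu> * g \<rho>) * (weyl_proj N \<nu> r t * weyl_proj N \<rho> t c))"
    by (intro sum.cong refl sum.swap)
  also have "\<dots> = (\<Sum>\<nu><N*N. \<Sum>\<rho><N*N. (f \<nu> * g \<rho>) * (if \<nu> = \<rho> then weyl_proj N \<nu> r c else 0))"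
    using N by (intro sum.cong refl) (simp add: sum_distrib_left[symmetric] weyl_proj_mult)
  also have "\<dots> = (\<Sum>\<nu><N*N. (f \<nu> * g \<nu>) * weyl_proj N \<nu> r c)"
    by (simp add: if_distrib sum.delta cong: if_cong)
  also have "\<dots> = weyl_diag N (\<lambda>\<nu>. f \<nu> * g \<nu>) $$ (r, c)"
    using rc by (simp add: index_weyl_diag)
  finally show "(weyl_diag N f * weyl_diag N g) $$ (r, c) = weyl_diag N (\<lambda>\<nu>. f \<nu> * g \<nu>) $$ (r, c)" .
qed simp_all

lemma one_mat_eq_weyl_diag:
  assumes "N > 0"
  shows "1\<^sub>m (N*N) = weyl_diag N (\<lambda>_. 1)"
  by (rule eq_matI) (auto simp: index_weyl_diag sum_weyl_proj[OF assms])

lemma weyl_diag_power: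
  assumes "N > 0"
  shows "weyl_diag N f ^\<^sub>m k = weyl_diag N (\<lambda>\<nu>. f \<nu> ^ k)"
  by (induction k) (simp_all add: one_mat_eq_weyl_diag[OF assms] weyl_diag_mult[OF assms] mult.commute)

lemma mexp_weyl_diag:
  assumes N: "N > 0"
  shows "mexp (weyl_diag N f) = weyl_diag N (\<lambda>\<nu>. exp (f \<nu>))"
proof (rule eq_matI)
  fix r c assume "r < dim_row (weyl_diag N (\<lambda>\<nu>. exp (f \<nu>)))" "c < dim_col (weyl_diag N (\<lambda>\<nu>. exp (f \<nu>)))"
  then have rc: "r < N*N" "c < N*N" by simp_all
  have "(\<lambda>k. f \<nu> ^ k / of_nat (fact k) * weyl_proj N \<nu> r c) sums (exp (f \<nu>) * weyl_proj N \<nu> r c)" for \<nu>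
    using exp_converges[of "f \<nu>"]
    by (intro sums_mult2) (simp add: scaleR_conv_of_real divide_inverse mult.commute)
  then have series: "(\<lambda>k. \<Sum>\<nu><N*N. f \<nu> ^ k / of_nat (fact k) * weyl_proj N \<nu> r c)
      sums (\<Sum>\<nu><N*N. exp (f \<nu>) * weyl_proj N \<nu> r c)"
    by (rule sums_sum)
  have "mexp (weyl_diag N f) $$ (r, c) = (\<Sum>k. (weyl_diag N f ^\<^sub>m k) $$ (r, c) / of_nat (fact k))"
    using rc by (simp add: mexp_def)
  also have "\<dots> = (\<Sum>k. \<Sum>\<nu><N*N. f \<nu> ^ k / of_nat (fact k) * weyl_proj N \<nu> r c)"
    unfolding weyl_diag_power[OF N] index_weyl_diag[OF rc] sum_divide_distrib by simp
  also have "\<dots> = (\<Sum>\<nu><N*N. exp (f \<nu>) * weyl_proj N \<nu> r c)"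
    using series by (rule sums_unique[symmetric])
  also have "\<dots> = weyl_diag N (\<lambda>\<nu>. exp (f \<nu>)) $$ (r, c)"
    using rc by (simp add: index_weyl_diag)
  finally show "mexp (weyl_diag N f) $$ (r, c) = weyl_diag N (\<lambda>\<nu>. exp (f \<nu>)) $$ (r, c)" .
qed (simp_all add: mexp_def)

lemma weyl_diag_eqD:
  assumes N: "N > 0" and eq: "weyl_diag N f = weyl_diag N g" and \<nu>: "\<nu> < N*N"
  shows "f \<nu> = g \<nu>"
proof -
  (* Cut out the eigenvalue with the projector onto |U_nu>> and evaluate at the position of the
     entry (nu div N, 0) of U_nu, which is 1. *)
  let ?\<delta> = "\<lambda>\<rho>. if \<rho> = \<nu> then 1 else 0 :: complex"
  let ?r = "N * (\<nu> div N)"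
  have r: "?r < N*N" using \<nu> times_div_less_eq_dividend[of N \<nu>] by linarith
  have proj: "weyl_proj N \<nu> ?r ?r = 1 / of_nat N"
    using N by (simp add: weyl_proj_def weyl_vec_def weyl_coeff_def)
  have entry: "weyl_diag N (\<lambda>\<rho>. h \<rho> * ?\<delta> \<rho>) $$ (?r, ?r) = h \<nu> / of_nat N" for h
  proof -
    have "weyl_diag N (\<lambda>\<rho>. h \<rho> * ?\<delta> \<rho>) $$ (?r, ?r)
        = (\<Sum>\<rho><N*N. if \<rho> = \<nu> then h \<nu> * weyl_proj N \<nu> ?r ?r else 0)"
      unfolding index_weyl_diag[OF r r] by (intro sum.cong refl) auto
    then show ?thesis using \<nu> proj by simp
  qed
  have "weyl_diag N (\<lambda>\<rho>. f \<rho> * ?\<delta> \<rho>) = weyl_diag N (\<lambda>\<rho>. g \<rho> * ?\<delta> \<rho>)"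
    using eq by (simp flip: weyl_diag_mult[OF N])
  then have "f \<nu> / of_nat N = g \<nu> / of_nat N"
    using entry by metis
  then show ?thesis using N by simp
qed

lemma weyl_diag_eq_iff:
  assumes "N > 0"
  shows "weyl_diag N f = weyl_diag N g \<longleftrightarrow> (\<forall>\<nu>\<in>{..<N*N}. f \<nu> = g \<nu>)"
  using weyl_diag_eqD[OF assms] weyl_diag_cong by blast

lemma weyl_diag_diff:
  "weyl_diag N f - weyl_diag N g = weyl_diag N (\<lambda>\<nu>. f \<nu> - g \<nu>)"
  by (rule eq_matI) (simp_all add: index_weyl_diag sum_subtractf left_diff_distrib)

lemma sum_mult_index_weyl_diag:
  assumes "r < N*N" "c < N*N"
  shows "(\<Sum>\<mu>\<in>A. a \<mu> * weyl_diag N (f \<mu>) $$ (r, c)) =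
    weyl_diag N (\<lambda>\<nu>. \<Sum>\<mu>\<in>A. a \<mu> * f \<mu> \<nu>) $$ (r, c)"
proof -
  have "(\<Sum>\<mu>\<in>A. a \<mu> * weyl_diag N (f \<mu>) $$ (r, c)) =
      (\<Sum>\<mu>\<in>A. \<Sum>\<nu><N*N. a \<mu> * f \<mu> \<nu> * weyl_proj N \<nu> r c)"
    using assms by (simp add: index_weyl_diag sum_distrib_left mult.assoc)
  also have "\<dots> = (\<Sum>\<nu><N*N. \<Sum>\<mu>\<in>A. a \<mu> * f \<mu> \<nu> * weyl_proj N \<nu> r c)"
    by (rule sum.swap)
  also have "\<dots> = weyl_diag N (\<lambda>\<nu>. \<Sum>\<mu>\<in>A. a \<mu> * f \<mu> \<nu>) $$ (r, c)"
    using assms by (simp add: index_weyl_diag sum_distrib_right)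
  finally show ?thesis .
qed

lemma superop_weylU_eq_weyl_diag:
  assumes "N > 0" "\<mu> < N*N"
  shows "superop N (weylU_idx N \<mu>) = weyl_diag N (\<lambda>\<nu>. Hmat N \<nu> \<mu>)"
proof (rule eq_matI)
  fix r c assume "r < dim_row (weyl_diag N (\<lambda>\<nu>. Hmat N \<nu> \<mu>))" "c < dim_col (weyl_diag N (\<lambda>\<nu>. Hmat N \<nu> \<mu>))"
  then show "superop N (weylU_idx N \<mu>) $$ (r, c) = weyl_diag N (\<lambda>\<nu>. Hmat N \<nu> \<mu>) $$ (r, c)"
    using assms by (simp add: superop_weylU_expansion index_weyl_diag)
qed (simp_all add: superop_def kron_def)

section \<open>The matrix \<open>H\<close>\<close>

lemma Hmat_0_left [simp]: "Hmat N 0 \<nu> = 1"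
  by (simp add: Hmat_eq_unit_root)

lemma Hmat_0_right [simp]: "Hmat N \<nu> 0 = 1"
  by (simp add: Hmat_eq_unit_root)

lemma Hmat_mult_Hmat:
  assumes N: "N > 0" and \<mu>: "\<mu> < N*N" and \<rho>: "\<rho> < N*N"
  shows "(\<Sum>\<nu><N*N. Hmat N \<mu> \<nu> * Hmat N \<nu> \<rho>) = (if \<mu> = \<rho> then of_nat (N*N) else 0)"
proof -
  let ?a = "\<mu> div N" and ?b = "\<mu> mod N" and ?c = "\<rho> div N" and ?d = "\<rho> mod N"
  have "(\<Sum>\<nu><N*N. Hmat N \<mu> \<nu> * Hmat N \<nu> \<rho>) =
    (\<Sum>k<N. \<Sum>l<N. unit_root N (int ?a * int l - int k * int ?b) *
                    unit_root N (int k * int ?d - int ?c * int l))"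
    unfolding Hmat_eq_unit_root by (rule sum_lessThan_square_div_mod)
  also have "\<dots> = (\<Sum>k<N. \<Sum>l<N. unit_root N (int k * (int ?d - int ?b)) *
                                  unit_root N (int l * (int ?a - int ?c)))"
    by (intro sum.cong refl) (simp add: unit_root_add[symmetric] algebra_simps)
  also have "\<dots> = (\<Sum>k<N. unit_root N (int k * (int ?d - int ?b))) *
                  (\<Sum>l<N. unit_root N (int l * (int ?a - int ?c)))"
    by (simp add: sum_product)
  also have "\<dots> = (if \<mu> = \<rho> then of_nat (N*N) else 0)"
    using \<mu> \<rho> by (simp add: sum_unit_root_diff N div_less_of_less_square mod_less_of_less_square
        eq_iff_div_mod_eq[of \<mu> \<rho> N])
  finally show ?thesis .
qed

lemma sum_Hmat_row:
  assumes "N > 0" "\<mu> < N*N"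
  shows "(\<Sum>\<nu><N*N. Hmat N \<mu> \<nu>) = (if \<mu> = 0 then of_nat (N*N) else 0)"
  using Hmat_mult_Hmat[OF assms, of 0] assms(1) by simp

lemma sum_Hmat_col:
  assumes "N > 0" "\<rho> < N*N"
  shows "(\<Sum>\<nu><N*N. Hmat N \<nu> \<rho>) = (if \<rho> = 0 then of_nat (N*N) else 0)"
  using Hmat_mult_Hmat[OF assms(1) _ assms(2), of 0] assms(1) by simp

definition gen_eig :: "nat \<Rightarrow> (nat \<Rightarrow> complex) \<Rightarrow> nat \<Rightarrow> complex" where
  "gen_eig N t \<nu> = (\<Sum>\<mu>\<in>{1..<N*N}. t \<mu> * (Hmat N \<nu> \<mu> - 1))"

lemma gen_eig_0 [simp]: "gen_eig N t 0 = 0"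
  unfolding gen_eig_def by simp

lemma lessThan_eq_insert_0: "0 < n \<Longrightarrow> {..<n} = insert 0 {1..<n}"
  for n :: nat by auto

lemma t_of_log_gen_eig:
  assumes N: "N > 0" and \<mu>: "\<mu> \<in> {1..<N*N}"
  shows "t_of_log N (gen_eig N t) \<mu> = t \<mu>"
proof -
  have "(\<Sum>\<nu>\<in>{1..<N*N}. Hmat N \<mu> \<nu> * gen_eig N t \<nu>) = (\<Sum>\<nu><N*N. Hmat N \<mu> \<nu> * gen_eig N t \<nu>)"
    using N by (simp add: lessThan_eq_insert_0)
  also have "\<dots> = (\<Sum>\<nu><N*N. \<Sum>\<rho>\<in>{1..<N*N}. t \<rho> * (Hmat N \<mu> \<nu> * Hmat N \<nu> \<rho> - Hmat N \<mu> \<nu>))"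
    unfolding gen_eig_def by (intro sum.cong refl) (simp add: sum_distrib_left algebra_simps)
  also have "\<dots> = (\<Sum>\<rho>\<in>{1..<N*N}. t \<rho> *
      ((\<Sum>\<nu><N*N. Hmat N \<mu> \<nu> * Hmat N \<nu> \<rho>) - (\<Sum>\<nu><N*N. Hmat N \<mu> \<nu>)))"
    by (subst sum.swap) (simp only: right_diff_distrib sum_subtractf sum_distrib_left)
  also have "\<dots> = (\<Sum>\<rho>\<in>{1..<N*N}. if \<rho> = \<mu> then t \<mu> * of_nat (N*N) else 0)"
    using \<mu> by (intro sum.cong refl) (auto simp: Hmat_mult_Hmat[OF N] sum_Hmat_row[OF N])
  also have "\<dots> = t \<mu> * of_nat (N*N)"
    using \<mu> by simp
  finally show ?thesis
    unfolding t_of_log_def using N by simp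
qed

lemma gen_eig_t_of_log:
  assumes N: "N > 0" and \<nu>: "\<nu> \<in> {1..<N*N}"
  shows "gen_eig N (t_of_log N l) \<nu> = l \<nu>"
proof -
  have t_of_log: "t_of_log N l \<mu> * of_nat (N*N) = (\<Sum>\<rho>\<in>{1..<N*N}. Hmat N \<mu> \<rho> * l \<rho>)" for \<mu>
    using N by (simp add: t_of_log_def)
  have "gen_eig N (t_of_log N l) \<nu> * of_nat (N*N) =
      (\<Sum>\<mu>\<in>{1..<N*N}. (t_of_log N l \<mu> * of_nat (N*N)) * (Hmat N \<nu> \<mu> - 1))"
    unfolding gen_eig_def sum_distrib_right by (simp add: mult_ac)
  also have "\<dots> = (\<Sum>\<mu>\<in>{1..<N*N}. (\<Sum>\<rho>\<in>{1..<N*N}. Hmat N \<mu> \<rho> * l \<rho>) * (Hmat N \<nu> \<mu> - 1))"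
    by (simp only: t_of_log)
  also have "\<dots> = (\<Sum>\<mu><N*N. (\<Sum>\<rho>\<in>{1..<N*N}. Hmat N \<mu> \<rho> * l \<rho>) * (Hmat N \<nu> \<mu> - 1))"
    using N by (simp add: lessThan_eq_insert_0)
  also have "\<dots> = (\<Sum>\<mu><N*N. \<Sum>\<rho>\<in>{1..<N*N}. l \<rho> * (Hmat N \<nu> \<mu> * Hmat N \<mu> \<rho> - Hmat N \<mu> \<rho>))"
    by (intro sum.cong refl) (subst sum_distrib_right, rule sum.cong, simp_all add: algebra_simps)
  also have "\<dots> = (\<Sum>\<rho>\<in>{1..<N*N}. l \<rho> *
      ((\<Sum>\<mu><N*N. Hmat N \<nu> \<mu> * Hmat N \<mu> \<rho>) - (\<Sum>\<mu><N*N. Hmat N \<mu> \<rho>)))"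
    by (subst sum.swap) (simp only: right_diff_distrib sum_subtractf sum_distrib_left)
  also have "\<dots> = (\<Sum>\<rho>\<in>{1..<N*N}. if \<rho> = \<nu> then l \<nu> * of_nat (N*N) else 0)"
    using \<nu> by (intro sum.cong refl) (auto simp: Hmat_mult_Hmat[OF N] sum_Hmat_col[OF N])
  also have "\<dots> = l \<nu> * of_nat (N*N)"
    using \<nu> by simp
  finally show ?thesis
    using N by simp
qed

section \<open>Weyl channels and generators in the Weyl basis\<close>

lemma weyl_channel_eq_weyl_diag:
  assumes N: "N > 0"
  shows "weyl_channel N p = weyl_diag N (weyl_eig N p)"
proof (rule eq_matI)
  fix r c assume "r < dim_row (weyl_diag N (weyl_eig N p))" "c < dim_col (weyl_diag N (weyl_eig N p))"
  then have rc: "r < N*N" "c < N*N" by simp_all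
  have "weyl_channel N p $$ (r, c) =
      (\<Sum>\<mu><N*N. of_real (p \<mu>) * weyl_diag N (\<lambda>\<nu>. Hmat N \<nu> \<mu>) $$ (r, c))"
    unfolding weyl_channel_def using rc by (simp add: superop_weylU_eq_weyl_diag[OF N])
  also have "\<dots> = weyl_diag N (weyl_eig N p) $$ (r, c)"
    unfolding sum_mult_index_weyl_diag[OF rc] weyl_eig_def by (simp add: mult.commute)
  finally show "weyl_channel N p $$ (r, c) = weyl_diag N (weyl_eig N p) $$ (r, c)" .
qed (simp_all add: weyl_channel_def)

lemma genL_eq_weyl_diag:
  assumes "N > 0" "\<mu> < N*N"
  shows "genL N \<mu> = weyl_diag N (\<lambda>\<nu>. Hmat N \<nu> \<mu> - 1)"
  unfolding genL_def superop_weylU_eq_weyl_diag[OF assms] one_mat_eq_weyl_diag[OF assms(1)]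
  by (rule weyl_diag_diff)

lemma gen_comb_eq_weyl_diag:
  assumes N: "N > 0"
  shows "gen_comb N t = weyl_diag N (gen_eig N t)"
proof (rule eq_matI)
  fix r c assume "r < dim_row (weyl_diag N (gen_eig N t))" "c < dim_col (weyl_diag N (gen_eig N t))"
  then have rc: "r < N*N" "c < N*N" by simp_all
  have "gen_comb N t $$ (r, c) =
      (\<Sum>\<mu>\<in>{1..<N*N}. t \<mu> * weyl_diag N (\<lambda>\<nu>. Hmat N \<nu> \<mu> - 1) $$ (r, c))"
    unfolding gen_comb_def using rc by (simp add: genL_eq_weyl_diag[OF N])
  also have "\<dots> = weyl_diag N (gen_eig N t) $$ (r, c)"
    unfolding sum_mult_index_weyl_diag[OF rc] gen_eig_def ..
  finally show "gen_comb N t $$ (r, c) = weyl_diag N (gen_eig N t) $$ (r, c)" .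
qed (simp_all add: gen_comb_def)

lemma gen_comb_cong:
  "(\<And>\<mu>. \<mu> \<in> {1..<N*N} \<Longrightarrow> s \<mu> = t \<mu>) \<Longrightarrow> gen_comb N s = gen_comb N t"
  unfolding gen_comb_def by (intro cong_mat refl) (auto intro!: sum.cong)

lemma weyl_eig_0:
  assumes "prob_vec N p"
  shows "weyl_eig N p 0 = 1"
  using assms unfolding prob_vec_def weyl_eig_def by (simp flip: of_real_sum)

lemma weyl_channel_eq_mexp_gen_comb_iff:
  assumes N: "N > 0" and p: "prob_vec N p"
  shows "weyl_channel N p = mexp (gen_comb N t) \<longleftrightarrow>
    (\<forall>\<nu>\<in>{1..<N*N}. exp (gen_eig N t \<nu>) = weyl_eig N p \<nu>)"
proof -
  have "{..<N*N} = insert 0 {1..<N*N}"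
    using N by (simp add: lessThan_eq_insert_0)
  then show ?thesis
    unfolding weyl_channel_eq_weyl_diag[OF N] gen_comb_eq_weyl_diag[OF N] mexp_weyl_diag[OF N]
      weyl_diag_eq_iff[OF N]
    using weyl_eig_0[OF p] by auto
qed

lemma weyl_channel_eq_mexp_t_of_log:
  assumes N: "N > 0" and p: "prob_vec N p"
    and lg: "\<forall>\<nu>\<in>{1..<N*N}. exp (lg \<nu>) = weyl_eig N p \<nu>"
  shows "weyl_channel N p = mexp (gen_comb N (t_of_log N lg))"
proof -
  have "\<forall>\<nu>\<in>{1..<N*N}. exp (gen_eig N (t_of_log N lg) \<nu>) = weyl_eig N p \<nu>"
    using lg gen_eig_t_of_log[OF N] by simp
  then show ?thesis
    by (rule weyl_channel_eq_mexp_gen_comb_iff[OF N p, THEN iffD2])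
qed

lemma weyl_channel_in_AQ_imp_logs:
  assumes N: "N > 0" and p: "prob_vec N p" and member: "weyl_channel N p \<in> AQ N"
  shows "\<exists>lg. (\<forall>\<nu>\<in>{1..<N*N}. exp (lg \<nu>) = weyl_eig N p \<nu>) \<and>
    (\<forall>\<mu>\<in>{1..<N*N}. t_of_log N lg \<mu> \<in> \<real> \<and> Re (t_of_log N lg \<mu>) \<ge> 0)"
proof -
  obtain t :: "nat \<Rightarrow> real" where t: "\<forall>\<mu>\<in>{1..<N*N}. t \<mu> \<ge> 0"
    and eq: "weyl_channel N p = mexp (gen_comb N (\<lambda>\<mu>. of_real (t \<mu>)))"
    using member unfolding AQ_def by blast
  from eq have "\<forall>\<nu>\<in>{1..<N*N}. exp (gen_eig N (\<lambda>\<mu>. of_real (t \<mu>)) \<nu>) = weyl_eig N p \<nu>"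
    by (rule weyl_channel_eq_mexp_gen_comb_iff[OF N p, THEN iffD1])
  moreover have "t_of_log N (gen_eig N (\<lambda>\<mu>. of_real (t \<mu>))) \<mu> = of_real (t \<mu>)"
    if "\<mu> \<in> {1..<N*N}" for \<mu>
    using t_of_log_gen_eig[OF N that] .
  ultimately show ?thesis
    using t by (intro exI[of _ "gen_eig N (\<lambda>\<mu>. of_real (t \<mu>))"] conjI ballI) simp_all
qed

theorem theorem1:
  fixes N :: nat and p :: "nat \<Rightarrow> real"
  assumes "N \<ge> 2" and "prob_vec N p"
  shows "(weyl_channel N p \<in> AQ N \<longleftrightarrow>
           (\<exists>lg :: nat \<Rightarrow> complex.
              (\<forall>\<nu>\<in>{1..<N*N}. exp (lg \<nu>) = weyl_eig N p \<nu>) \<and>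
              (\<forall>\<mu>\<in>{1..<N*N}. t_of_log N lg \<mu> \<in> \<real> \<and> Re (t_of_log N lg \<mu>) \<ge> 0)))
       \<and> (\<forall>lg :: nat \<Rightarrow> complex.
              (\<forall>\<nu>\<in>{1..<N*N}. exp (lg \<nu>) = weyl_eig N p \<nu>) \<and>
              (\<forall>\<mu>\<in>{1..<N*N}. t_of_log N lg \<mu> \<in> \<real> \<and> Re (t_of_log N lg \<mu>) \<ge> 0)
            \<longrightarrow> weyl_channel N p = mexp (gen_comb N (t_of_log N lg)))"
proof -
  have N: "N > 0" using assms(1) by simp
  have "weyl_channel N p \<in> AQ N"
    if lg: "\<forall>\<nu>\<in>{1..<N*N}. exp (lg \<nu>) = weyl_eig N p \<nu>"
      and real: "\<forall>\<mu>\<in>{1..<N*N}. t_of_log N lg \<mu> \<in> \<real> \<and> Re (t_of_log N lg \<mu>) \<ge> 0" for lg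
  proof -
    have "gen_comb N (t_of_log N lg) = gen_comb N (\<lambda>\<mu>. of_real (Re (t_of_log N lg \<mu>)))"
      by (rule gen_comb_cong) (use real in \<open>simp add: complex_is_Real_iff complex_eq_iff\<close>)
    then show ?thesis
      unfolding AQ_def using weyl_channel_eq_mexp_t_of_log[OF N assms(2) lg] real
      by (intro CollectI exI[of _ "\<lambda>\<mu>. Re (t_of_log N lg \<mu>)"] conjI) auto
  qed
  then show ?thesis
    using weyl_channel_in_AQ_imp_logs[OF N assms(2)] weyl_channel_eq_mexp_t_of_log[OF N assms(2)]
    by blast
qed

end
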